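(* Let $G$ be a connected graph and $C$ the vertex set of a block of $G$ such that $G[C]$ is a cycle. Then every connected forcing set $R$ of $G$ excludes at most one segment of $C$; that is, the set $C\setminus R$ is either empty or consists of cyclically consecutive vertices of the cycle $G[C]$ (it does not contain two disjoint, non-adjacent nonempty segments with vertices of $R$ lying between them on both sides).
   Context: A block is a maximal subgraph with no articulation point. Fix a cyclic orientation of $C$; for $u,v\in C$ the segment $(u\hookrightarrow v)$ is the set of vertices of $C$ strictly between $u$ and $v$ traveling along the cycle from $u$ to $v$ in that orientation. Zero forcing: given a set $S$ of initially colored vertices, if a colored vertex $u$ has exactly one uncolored neighbor $w$, then $w$ becomes colored; $S$ is a zero forcing set if repeated application colors all vertices. A connected forcing set is a zero forcing set $S$ with $G[S]$ connected. *)

theory Defs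
  imports Main
begin

definition simple_graph :: "'a set \<Rightarrow> ('a \<Rightarrow> 'a \<Rightarrow> bool) \<Rightarrow> bool" where
  "simple_graph V E \<longleftrightarrow> finite V \<and> (\<forall>x y. E x y \<longrightarrow> E y x) \<and> (\<forall>x. \<not> E x x)
     \<and> (\<forall>x y. E x y \<longrightarrow> x \<in> V \<and> y \<in> V)"

definition connected_on :: "('a \<Rightarrow> 'a \<Rightarrow> bool) \<Rightarrow> 'a set \<Rightarrow> bool" where
  "connected_on E S \<longleftrightarrow> S \<noteq> {} \<and>
     (\<forall>x\<in>S. \<forall>y\<in>S. (x, y) \<in> {(a, b). a \<in> S \<and> b \<in> S \<and> E a b}\<^sup>*)"

definition no_cut_vertex :: "('a \<Rightarrow> 'a \<Rightarrow> bool) \<Rightarrow> 'a set \<Rightarrow> bool" where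
  "no_cut_vertex E S \<longleftrightarrow> connected_on E S \<and>
     (\<forall>v\<in>S. S - {v} \<noteq> {} \<longrightarrow> connected_on E (S - {v}))"

definition is_block :: "'a set \<Rightarrow> ('a \<Rightarrow> 'a \<Rightarrow> bool) \<Rightarrow> 'a set \<Rightarrow> bool" where
  "is_block V E C \<longleftrightarrow> C \<subseteq> V \<and> no_cut_vertex E C \<and>
     (\<forall>D. C \<subset> D \<and> D \<subseteq> V \<longrightarrow> \<not> no_cut_vertex E D)"

definition cycle_enum :: "('a \<Rightarrow> 'a \<Rightarrow> bool) \<Rightarrow> 'a set \<Rightarrow> (nat \<Rightarrow> 'a) \<Rightarrow> bool" where
  "cycle_enum E C f \<longleftrightarrow> card C \<ge> 3 \<and> bij_betw f {0..<card C} C \<and>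
     (\<forall>x\<in>C. \<forall>y\<in>C. E x y \<longleftrightarrow>
        (\<exists>i<card C. (x = f i \<and> y = f (Suc i mod card C)) \<or> (y = f i \<and> x = f (Suc i mod card C))))"

definition force_step :: "'a set \<Rightarrow> ('a \<Rightarrow> 'a \<Rightarrow> bool) \<Rightarrow> 'a set \<Rightarrow> 'a set \<Rightarrow> bool" where
  "force_step V E S S' \<longleftrightarrow> (\<exists>u w. u \<in> S \<and> w \<in> V - S \<and> E u w \<and>
     (\<forall>x\<in>V. E u x \<and> x \<noteq> w \<longrightarrow> x \<in> S) \<and> S' = insert w S)"

definition zero_forcing_set :: "'a set \<Rightarrow> ('a \<Rightarrow> 'a \<Rightarrow> bool) \<Rightarrow> 'a set \<Rightarrow> bool" where
  "zero_forcing_set V E S \<longleftrightarrow> S \<subseteq> V \<and> (S, V) \<in> {(A, B). force_step V E A B}\<^sup>*"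

definition connected_forcing_set :: "'a set \<Rightarrow> ('a \<Rightarrow> 'a \<Rightarrow> bool) \<Rightarrow> 'a set \<Rightarrow> bool" where
  "connected_forcing_set V E S \<longleftrightarrow> zero_forcing_set V E S \<and> connected_on E S"

end

theory Submission
  imports Defs
begin

text \<open>Only the connectivity of \<open>R\<close> matters. A walk in \<open>G[R]\<close> between two vertices of the
  block \<open>C\<close> can be shortcut inside \<open>G[R \<inter> C]\<close>: if it left \<open>C\<close> at \<open>c\<close> and re-entered at
  some \<open>z \<noteq> c\<close>, the excursion would be an ear, and a graph without cut vertex stays so after
  adding an ear, contradicting the maximality of the block. So \<open>R \<inter> C\<close> induces a connected
  subgraph of the cycle \<open>G[C]\<close>, i.e. an arc, and the complement of an arc is an arc.\<close>

section \<open>Blocks\<close>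

fun walk :: "('a \<Rightarrow> 'a \<Rightarrow> bool) \<Rightarrow> 'a list \<Rightarrow> bool" where
  "walk E [] = True"
| "walk E [x] = True"
| "walk E (x # y # xs) = (E x y \<and> walk E (y # xs))"

lemma walk_append:
  "walk E (xs @ ys) \<longleftrightarrow> walk E xs \<and> walk E ys \<and> (xs \<noteq> [] \<and> ys \<noteq> [] \<longrightarrow> E (last xs) (hd ys))"
proof (induction xs)
  case (Cons a xs)
  then show ?case by (cases xs; cases ys) auto
qed simp

lemma connected_on_singleton: "connected_on E {x}"
  by (simp add: connected_on_def)

lemma induced_rtrancl_mono:
  "(x, y) \<in> {(a, b). a \<in> A \<and> b \<in> A \<and> E a b}\<^sup>* \<Longrightarrow> A \<subseteq> B \<Longrightarrow>
   (x, y) \<in> {(a, b). a \<in> B \<and> b \<in> B \<and> E a b}\<^sup>*"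
  by (rule rtrancl_mono[THEN subsetD]) auto

lemma connected_on_Un_edge:
  assumes sym: "symp E"
    and A: "connected_on E A" and B: "connected_on E B"
    and "a \<in> A" "b \<in> B" "E a b"
  shows "connected_on E (A \<union> B)"
proof -
  let ?r = "{(x, y). x \<in> A \<union> B \<and> y \<in> A \<union> B \<and> E x y}"
  have inA: "(x, y) \<in> ?r\<^sup>*" if "x \<in> A" "y \<in> A" for x y
    using A that induced_rtrancl_mono[of x y A E "A \<union> B"] unfolding connected_on_def by blast
  have inB: "(x, y) \<in> ?r\<^sup>*" if "x \<in> B" "y \<in> B" for x y
    using B that induced_rtrancl_mono[of x y B E "A \<union> B"] unfolding connected_on_def by blast
  have "(a, b) \<in> ?r\<^sup>*" "(b, a) \<in> ?r\<^sup>*"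
    using assms(4-6) sympD[OF sym] by auto
  then have via_a: "(x, a) \<in> ?r\<^sup>* \<and> (a, x) \<in> ?r\<^sup>*" if "x \<in> A \<union> B" for x
  proof (cases "x \<in> A")
    case False
    with that have "x \<in> B" by blast
    with \<open>(a, b) \<in> ?r\<^sup>*\<close> \<open>(b, a) \<in> ?r\<^sup>*\<close> inB[OF _ \<open>b \<in> B\<close>] inB[OF \<open>b \<in> B\<close>] show ?thesis
      by (meson rtrancl_trans)
  qed (use inA \<open>a \<in> A\<close> in blast)
  show ?thesis
    unfolding connected_on_def
  proof (intro conjI ballI)
    show "A \<union> B \<noteq> {}"
      using \<open>a \<in> A\<close> by blast
  next
    fix x y assume "x \<in> A \<union> B" "y \<in> A \<union> B"
    with via_a show "(x, y) \<in> ?r\<^sup>*"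
      by (meson rtrancl_trans)
  qed
qed

lemma connected_on_walk:
  assumes sym: "symp E"
  shows "walk E xs \<Longrightarrow> xs \<noteq> [] \<Longrightarrow> connected_on E (set xs)"
proof (induction xs)
  case (Cons x xs)
  show ?case
  proof (cases xs)
    case (Cons y ys)
    with Cons.prems Cons.IH have "connected_on E ({x} \<union> set xs)"
      by (intro connected_on_Un_edge[where a = x and b = y] connected_on_singleton sym) auto
    then show ?thesis by simp
  qed (simp add: connected_on_singleton)
qed simp

lemma no_cut_vertex_add_ear:
  assumes sym: "symp E" and C: "no_cut_vertex E C"
    and "c \<in> C" "z \<in> C" "c \<noteq> z"
    and ys: "ys \<noteq> []" "distinct ys" "walk E ys" "set ys \<inter> C = {}"
    and ends: "E c (hd ys)" "E (last ys) z"
  shows "no_cut_vertex E (C \<union> set ys)"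
  unfolding no_cut_vertex_def
proof (intro conjI ballI impI)
  have conn_C: "connected_on E C"
    using C unfolding no_cut_vertex_def by blast
  have conn_C_minus: "connected_on E (C - {v})" if "v \<in> C" for v
  proof -
    have "C - {v} \<noteq> {}"
      using \<open>c \<in> C\<close> \<open>z \<in> C\<close> \<open>c \<noteq> z\<close> by blast
    then show ?thesis
      using C that unfolding no_cut_vertex_def by blast
  qed
  have conn_ys: "connected_on E (set ys)"
    using connected_on_walk[OF sym] ys by blast
  show "connected_on E (C \<union> set ys)"
    using connected_on_Un_edge[OF sym conn_C conn_ys \<open>c \<in> C\<close> _ ends(1)] ys(1) by simp
  fix v assume "v \<in> C \<union> set ys"
  then consider "v \<in> C" "v \<noteq> c" | "v = c" | "v \<in> set ys"
    by blast
  then show "connected_on E (C \<union> set ys - {v})"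
  proof cases
    case 1
    then have "C \<union> set ys - {v} = (C - {v}) \<union> set ys"
      using ys(4) by auto
    then show ?thesis
      using connected_on_Un_edge[OF sym conn_C_minus[OF \<open>v \<in> C\<close>] conn_ys _ _ ends(1)]
        1 \<open>c \<in> C\<close> ys(1) by simp
  next
    case 2
    then have "C \<union> set ys - {v} = (C - {v}) \<union> set ys"
      using ys(4) \<open>c \<in> C\<close> by auto
    then show ?thesis
      using connected_on_Un_edge[OF sym conn_C_minus[OF \<open>c \<in> C\<close>] conn_ys _ _ sympD[OF sym ends(2)]]
        2 \<open>z \<in> C\<close> \<open>c \<noteq> z\<close> ys(1) by simp
  next
    case 3
    then obtain as bs where ys_split: "ys = as @ v # bs"
      by (meson split_list)
    with ys(2,4) have split: "C \<union> set ys - {v} = (C \<union> set as) \<union> set bs"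
      by auto
    from ys(3) ys_split have walks: "walk E as" "walk E bs"
      using walk_append[of E as "v # bs"] walk_append[of E "[v]" bs] by auto
    have conn_left: "connected_on E (C \<union> set as)"
    proof (cases "as = []")
      case False
      with ends(1) ys_split show ?thesis
        using connected_on_Un_edge[OF sym conn_C connected_on_walk[OF sym walks(1) False] \<open>c \<in> C\<close> hd_in_set[OF False]]
        by simp
    qed (simp add: conn_C)
    show ?thesis
    proof (cases "bs = []")
      case False
      with ends(2) ys_split have "E z (last bs)"
        by (simp add: sympD[OF sym])
      then show ?thesis
        unfolding split
        using connected_on_Un_edge[OF sym conn_left connected_on_walk[OF sym walks(2) False] _ last_in_set[OF False]]
          \<open>z \<in> C\<close> by blast
    qed (simp add: split conn_left)
  qed
qed

definition excursion :: "'a set \<Rightarrow> ('a \<Rightarrow> 'a \<Rightarrow> bool) \<Rightarrow> 'a set \<Rightarrow> 'a \<Rightarrow> 'a \<Rightarrow> bool" where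
  "excursion V E C c y \<longleftrightarrow> (\<exists>ys. ys \<noteq> [] \<and> distinct ys \<and> walk E ys \<and> set ys \<subseteq> V - C
     \<and> E c (hd ys) \<and> last ys = y)"

lemma excursion_edge: "E c y \<Longrightarrow> y \<in> V - C \<Longrightarrow> excursion V E C c y"
  unfolding excursion_def by (intro exI[of _ "[y]"]) simp

lemma excursion_extend:
  assumes "excursion V E C c y" "E y z" "z \<in> V - C"
  shows "excursion V E C c z"
proof -
  obtain ys where ys: "ys \<noteq> []" "distinct ys" "walk E ys" "set ys \<subseteq> V - C" "E c (hd ys)" "last ys = y"
    using assms(1) unfolding excursion_def by blast
  show ?thesis
  proof (cases "z \<in> set ys")
    case True
    then obtain as bs where ys_split: "ys = as @ z # bs"
      by (meson split_list)
    with ys have "walk E (as @ [z])"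
      using walk_append[of E as "z # bs"] walk_append[of E as "[z]"] by auto
    with ys ys_split show ?thesis
      unfolding excursion_def by (intro exI[of _ "as @ [z]"]) (cases as; auto)
  next
    case False
    with ys assms(2,3) show ?thesis
      unfolding excursion_def by (intro exI[of _ "ys @ [z]"]) (simp add: walk_append)
  qed
qed

lemma block_excursion_returns:
  assumes G: "simple_graph V E" and B: "is_block V E C"
    and "c \<in> C" "z \<in> C" "excursion V E C c y" "E y z"
  shows "z = c"
proof (rule ccontr)
  assume "z \<noteq> c"
  obtain ys where ys: "ys \<noteq> []" "distinct ys" "walk E ys" "set ys \<subseteq> V - C" "E c (hd ys)" "last ys = y"
    using assms(5) unfolding excursion_def by blast
  have "symp E"
    using G unfolding simple_graph_def by (simp add: sympI)
  then have "no_cut_vertex E (C \<union> set ys)"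
    using no_cut_vertex_add_ear[of E C c z ys] B ys \<open>z \<noteq> c\<close> assms(3,4,6)
    unfolding is_block_def by auto
  moreover have "C \<subset> C \<union> set ys" "C \<union> set ys \<subseteq> V"
    using ys(1,4) B unfolding is_block_def by (auto simp: neq_Nil_conv)
  ultimately show False
    using B unfolding is_block_def by blast
qed

lemma block_reachable_cases:
  assumes G: "simple_graph V E" and B: "is_block V E C" and x: "x \<in> R \<inter> C"
    and "(x, y) \<in> {(a, b). a \<in> R \<and> b \<in> R \<and> E a b}\<^sup>*"
  shows "if y \<in> C then (x, y) \<in> {(a, b). a \<in> R \<inter> C \<and> b \<in> R \<inter> C \<and> E a b}\<^sup>*
         else \<exists>c \<in> R \<inter> C. (x, c) \<in> {(a, b). a \<in> R \<inter> C \<and> b \<in> R \<inter> C \<and> E a b}\<^sup>*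
                         \<and> excursion V E C c y"
  using assms(4)
proof (induction rule: rtrancl_induct)
  case base
  with x show ?case by simp
next
  case (step y z)
  then have "y \<in> R" "z \<in> R" "E y z" "z \<in> V"
    using G unfolding simple_graph_def by auto
  show ?case
  proof (cases "y \<in> C")
    case True
    with step.IH \<open>y \<in> R\<close> \<open>z \<in> R\<close> \<open>E y z\<close> \<open>z \<in> V\<close> show ?thesis
      by (auto intro: rtrancl_into_rtrancl excursion_edge)
  next
    case False
    with step.IH obtain c where c: "c \<in> R \<inter> C"
        "(x, c) \<in> {(a, b). a \<in> R \<inter> C \<and> b \<in> R \<inter> C \<and> E a b}\<^sup>*" "excursion V E C c y"
      by auto
    show ?thesis
    proof (cases "z \<in> C")
      case True
      with block_excursion_returns[OF G B _ True c(3) \<open>E y z\<close>] c show ?thesis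
        by auto
    next
      case False
      with c \<open>E y z\<close> \<open>z \<in> V\<close> show ?thesis
        by (auto intro: excursion_extend)
    qed
  qed
qed

lemma connected_on_Int_block:
  assumes "simple_graph V E" "is_block V E C" "connected_on E R" "R \<inter> C \<noteq> {}"
  shows "connected_on E (R \<inter> C)"
  using assms block_reachable_cases[OF assms(1,2)] unfolding connected_on_def
  by (metis (no_types, lifting) IntD1 IntD2)

section \<open>Cycles\<close>

lemma bij_betw_rotate_mod:
  fixes i n :: nat
  assumes "i < n"
  shows "bij_betw (\<lambda>j. (i + j) mod n) {0..<n} {0..<n}"
proof (rule bij_betw_byWitness[where f' = "\<lambda>j. (j + (n - i)) mod n"])
  show "\<forall>j\<in>{0..<n}. ((i + j) mod n + (n - i)) mod n = j"
  proof
    fix j assume "j \<in> {0..<n}"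
    have "((i + j) mod n + (n - i)) mod n = (i + j + (n - i)) mod n"
      by (rule mod_add_left_eq)
    also have "i + j + (n - i) = j + n"
      using assms by simp
    finally show "((i + j) mod n + (n - i)) mod n = j"
      using \<open>j \<in> {0..<n}\<close> by simp
  qed
  show "\<forall>j\<in>{0..<n}. (i + (j + (n - i)) mod n) mod n = j"
  proof
    fix j assume "j \<in> {0..<n}"
    then have "(i + (j + (n - i)) mod n) mod n = (j + n) mod n"
      using assms by (simp add: mod_add_right_eq)
    then show "(i + (j + (n - i)) mod n) mod n = j"
      using \<open>j \<in> {0..<n}\<close> by simp
  qed
qed (use assms in auto)

lemma cycle_enum_rotate:
  assumes f: "cycle_enum E C f" and i: "i < card C"
  shows "cycle_enum E C (\<lambda>j. f ((i + j) mod card C))"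
proof -
  let ?n = "card C" and ?r = "\<lambda>j. (i + j) mod card C"
  have n: "?n \<ge> 3" and bij_f: "bij_betw f {0..<?n} C"
    and adj_f: "\<forall>x\<in>C. \<forall>y\<in>C. E x y \<longleftrightarrow>
        (\<exists>k<?n. (x = f k \<and> y = f (Suc k mod ?n)) \<or> (y = f k \<and> x = f (Suc k mod ?n)))"
    using f unfolding cycle_enum_def by auto
  have bij_r: "bij_betw ?r {0..<?n} {0..<?n}"
    using bij_betw_rotate_mod[OF i] .
  have reindex: "(\<exists>k<?n. P k) \<longleftrightarrow> (\<exists>j<?n. P (?r j))" for P
  proof -
    have "(\<exists>k<?n. P k) \<longleftrightarrow> (\<exists>k\<in>?r ` {0..<?n}. P k)"
      using bij_betw_imp_surj_on[OF bij_r] by auto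
    then show ?thesis
      by auto
  qed
  have succ: "Suc (?r j) mod ?n = ?r (Suc j mod ?n)" for j
    by (simp add: mod_add_right_eq mod_Suc_eq)
  have "E x y \<longleftrightarrow>
      (\<exists>j<?n. (x = f (?r j) \<and> y = f (?r (Suc j mod ?n))) \<or> (y = f (?r j) \<and> x = f (?r (Suc j mod ?n))))"
    if "x \<in> C" "y \<in> C" for x y
  proof -
    have "E x y \<longleftrightarrow> (\<exists>k<?n. (x = f k \<and> y = f (Suc k mod ?n)) \<or> (y = f k \<and> x = f (Suc k mod ?n)))"
      using adj_f that by blast
    also have "\<dots> \<longleftrightarrow>
        (\<exists>j<?n. (x = f (?r j) \<and> y = f (Suc (?r j) mod ?n)) \<or> (y = f (?r j) \<and> x = f (Suc (?r j) mod ?n)))"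
      by (rule reindex)
    finally show ?thesis
      by (simp only: succ)
  qed
  with n bij_betw_trans[OF bij_r bij_f] show ?thesis
    unfolding cycle_enum_def comp_def by blast
qed

lemma cycle_enum_adjacent:
  assumes g: "cycle_enum E C g" and "j < card C" "y \<in> C" "E (g j) y"
  shows "\<exists>k<card C. y = g k \<and> (k = Suc j mod card C \<or> j = Suc k mod card C)"
proof -
  let ?n = "card C"
  have n: "?n \<ge> 3" and bij_g: "bij_betw g {0..<?n} C"
    and adj_g: "\<forall>x\<in>C. \<forall>y\<in>C. E x y \<longleftrightarrow>
        (\<exists>k<?n. (x = g k \<and> y = g (Suc k mod ?n)) \<or> (y = g k \<and> x = g (Suc k mod ?n)))"
    using g unfolding cycle_enum_def by auto
  have inj: "a = b" if "a < ?n" "b < ?n" "g a = g b" for a b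
    using bij_g that unfolding bij_betw_def inj_on_def by auto
  have "g j \<in> C"
    using bij_g \<open>j < ?n\<close> bij_betwE by fastforce
  with adj_g assms(3,4) obtain k where k: "k < ?n"
    "(g j = g k \<and> y = g (Suc k mod ?n)) \<or> (y = g k \<and> g j = g (Suc k mod ?n))"
    by blast
  have Suc_mod: "Suc k mod ?n < ?n"
    using n by simp
  from k(2) show ?thesis
  proof
    assume "g j = g k \<and> y = g (Suc k mod ?n)"
    with inj[OF \<open>j < ?n\<close> k(1)] Suc_mod show ?thesis
      by blast
  next
    assume "y = g k \<and> g j = g (Suc k mod ?n)"
    with inj[OF \<open>j < ?n\<close> Suc_mod] k(1) show ?thesis
      by blast
  qed
qed

lemma cycle_reachable_within_arc:
  assumes g: "cycle_enum E C g" and S: "S \<subseteq> C" "g 0 \<notin> S" "g m \<notin> S"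
    and "m < card C" "0 < j" "j < m"
    and "(g j, y) \<in> {(a, b). a \<in> S \<and> b \<in> S \<and> E a b}\<^sup>*"
  shows "\<exists>l. 0 < l \<and> l < m \<and> y = g l"
  using assms(8)
proof (induction rule: rtrancl_induct)
  case base
  with assms(6,7) show ?case by blast
next
  case (step y z)
  then obtain l where l: "0 < l" "l < m" "y = g l" and z: "z \<in> S" "E (g l) z"
    by blast
  with cycle_enum_adjacent[OF g, of l z] S(1) \<open>m < card C\<close> obtain k where k: "k < card C" "z = g k"
    "k = Suc l mod card C \<or> l = Suc k mod card C"
    by auto
  from k(3) have "0 < k \<and> k < m"
  proof
    assume "k = Suc l mod card C"
    then have "k = Suc l"
      using l(2) \<open>m < card C\<close> by simp
    moreover have "k \<noteq> m"
      using S(3) z(1) k(2) by blast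
    ultimately show ?thesis
      using l(2) by simp
  next
    assume "l = Suc k mod card C"
    then have "l = Suc k"
      using l(1) k(1) by (metis mod_less mod_self not_less_iff_gr_or_eq not_less_eq gr_implies_not0)
    moreover have "k \<noteq> 0"
      using S(2) z(1) k(2) by metis
    ultimately show ?thesis
      using l(2) by simp
  qed
  with k(2) show ?case
    by blast
qed

lemma cycle_connected_complement_prefix:
  assumes g: "cycle_enum E C g" and S: "S \<subseteq> C" "connected_on E S"
    and "g 0 \<notin> S" "g (card C - 1) \<in> S"
  shows "\<exists>k \<le> card C. C - S = g ` {0..<k}"
proof -
  let ?n = "card C"
  have n: "?n \<ge> 3" and bij_g: "bij_betw g {0..<?n} C"
    using g unfolding cycle_enum_def by auto
  have inj: "a = b" if "a < ?n" "b < ?n" "g a = g b" for a b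
    using bij_g that unfolding bij_betw_def inj_on_def by auto
  \<comment> \<open>An index \<open>m > k\<close> outside \<open>S\<close> would cut the path from \<open>g k\<close> to \<open>g (n - 1)\<close> in \<open>S\<close>.\<close>
  define k where "k = (LEAST j. j < ?n \<and> g j \<in> S)"
  have k: "k < ?n" "g k \<in> S"
    using LeastI[of "\<lambda>j. j < ?n \<and> g j \<in> S" "?n - 1"] \<open>g (?n - 1) \<in> S\<close> n
    unfolding k_def by auto
  have before_k: "g j \<notin> S" if "j < k" for j
    using not_less_Least[of j "\<lambda>j. j < ?n \<and> g j \<in> S"] that k(1) unfolding k_def by auto
  have "x \<in> g ` {0..<k}" if x: "x \<in> C - S" for x
  proof -
    obtain m where m: "m < ?n" "x = g m"
      using bij_betw_imp_surj_on[OF bij_g] \<open>x \<in> C - S\<close> by force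
    show ?thesis
    proof (rule ccontr)
      assume "x \<notin> g ` {0..<k}"
      moreover have "m \<noteq> k" "m \<noteq> ?n - 1"
        using m(2) x k(2) \<open>g (?n - 1) \<in> S\<close> by auto
      ultimately have "k < m" "m < ?n - 1"
        using m by auto
      have "0 < k"
        using k(2) \<open>g 0 \<notin> S\<close> by (metis gr0I)
      moreover have "(g k, g (?n - 1)) \<in> {(a, b). a \<in> S \<and> b \<in> S \<and> E a b}\<^sup>*"
        using S(2) k(2) \<open>g (?n - 1) \<in> S\<close> unfolding connected_on_def by blast
      ultimately obtain l where "l < m" "g (?n - 1) = g l"
        using cycle_reachable_within_arc[OF g S(1) \<open>g 0 \<notin> S\<close>, of m k] m x \<open>k < m\<close> \<open>m < ?n - 1\<close>
        by auto
      with inj[of "?n - 1" l] \<open>m < ?n - 1\<close> show False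
        by linarith
    qed
  qed
  moreover have "g ` {0..<k} \<subseteq> C - S"
    using before_k k(1) bij_betwE[OF bij_g] by auto
  ultimately show ?thesis
    using k(1) by (intro exI[of _ k]) auto
qed

lemma exists_cyclic_boundary:
  fixes P :: "nat \<Rightarrow> bool"
  assumes "a < n" "\<not> P a" "b < n" "P b"
  shows "\<exists>i<n. \<not> P i \<and> P ((i + (n - 1)) mod n)"
proof (rule ccontr)
  assume no_boundary: "\<not> ?thesis"
  have "P ((b + m) mod n)" for m
  proof (induction m)
    case 0
    with assms(3,4) show ?case by simp
  next
    case (Suc m)
    have "((b + Suc m) mod n + (n - 1)) mod n = (b + Suc m + (n - 1)) mod n"
      by (rule mod_add_left_eq)
    also have "b + Suc m + (n - 1) = b + m + n"
      using assms(1) by simp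
    finally have "((b + Suc m) mod n + (n - 1)) mod n = (b + m) mod n"
      by simp
    moreover have "(b + Suc m) mod n < n"
      using assms(1) by simp
    ultimately show ?case
      using Suc.IH no_boundary by auto
  qed
  from this[of "a + n - b"] assms(1-3) show False
    by simp
qed

lemma cycle_connected_complement_arc:
  assumes f: "cycle_enum E C f" and S: "S \<subseteq> C" "S \<noteq> {} \<Longrightarrow> connected_on E S"
  shows "C - S = {} \<or> (\<exists>i k. k \<le> card C \<and> C - S = {f ((i + j) mod card C) | j. j < k})"
proof -
  let ?n = "card C"
  have bij_f: "bij_betw f {0..<?n} C"
    using f unfolding cycle_enum_def by auto
  consider "S = {}" | "S = C" | "S \<noteq> {}" "S \<noteq> C"
    by blast
  then show ?thesis
  proof cases
    case 1
    have "C = f ` {0..<?n}"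
      using bij_betw_imp_surj_on[OF bij_f] by (rule sym)
    also have "\<dots> = {f ((0 + j) mod ?n) | j. j < ?n}"
      by auto (metis mod_less)
    finally have "C - S = {f ((0 + j) mod ?n) | j. j < ?n}"
      using 1 by (simp only: Diff_empty)
    then show ?thesis
      by (intro disjI2 exI[of _ 0] exI[of _ ?n] conjI le_refl)
  next
    case 3
    have index: "\<exists>j<?n. x = f j" if "x \<in> C" for x
      using bij_betw_imp_surj_on[OF bij_f] that by force
    obtain a b where "a < ?n" "f a \<notin> S" "b < ?n" "f b \<in> S"
      using index 3 S(1) by blast
    \<comment> \<open>Rotate the enumeration so that it starts at a vertex outside \<open>S\<close> preceded by one in \<open>S\<close>.\<close>
    then obtain i where i: "i < ?n" "f i \<notin> S" "f ((i + (?n - 1)) mod ?n) \<in> S"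
      using exists_cyclic_boundary[of a ?n "\<lambda>j. f j \<in> S" b] by auto
    then obtain k where "k \<le> ?n" "C - S = (\<lambda>j. f ((i + j) mod ?n)) ` {0..<k}"
      using cycle_connected_complement_prefix[OF cycle_enum_rotate[OF f i(1)] S(1) S(2)[OF 3(1)]] by auto
    moreover have "(\<lambda>j. f ((i + j) mod ?n)) ` {0..<k} = {f ((i + j) mod ?n) | j. j < k}"
      by auto
    ultimately show ?thesis
      by (intro disjI2 exI[of _ i] exI[of _ k] conjI) simp_all
  qed simp
qed

theorem lemma3:
  fixes V C R :: "'a set" and E :: "'a \<Rightarrow> 'a \<Rightarrow> bool" and f :: "nat \<Rightarrow> 'a"
  assumes "simple_graph V E"
    and "connected_on E V"
    and "is_block V E C"
    and "cycle_enum E C f"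
    and "connected_forcing_set V E R"
  shows "C - R = {} \<or>
         (\<exists>i k. k \<le> card C \<and> C - R = {f ((i + j) mod card C) | j. j < k})"
proof -
  have "R \<inter> C \<noteq> {} \<Longrightarrow> connected_on E (R \<inter> C)"
    using connected_on_Int_block[OF assms(1,3)] assms(5)
    unfolding connected_forcing_set_def by blast
  then have "C - R \<inter> C = {} \<or>
      (\<exists>i k. k \<le> card C \<and> C - R \<inter> C = {f ((i + j) mod card C) | j. j < k})"
    using cycle_connected_complement_arc[OF assms(4)] by blast
  moreover have "C - R \<inter> C = C - R"
    by blast
  ultimately show ?thesis
    by simp
qed

end
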